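(* For a fixed program $\mathcal{P}$ and set of processes $\Pi$, the set of last-use opaque histories produced by executions of $\mathcal{P}$ by $\Pi$ is (a) prefix-closed: every prefix of a last-use opaque history is last-use opaque, and (b) limit-closed: if $H_0,H_1,\dots$ is an infinite sequence of finite last-use opaque histories with each $H_h$ a prefix of $H_{h+1}$, then the infinite limit history is last-use opaque. Hence last-use opacity is a safety property.
   Context: Standard TM model: transactions $T_i$ with operations $\mathit{init}_i$, $\mathit{read}_i(x)$, $\mathit{write}_i(x,v)$, $\mathit{tryC}_i$, $\mathit{tryA}_i$, each an invocation/response pair; histories are well-formed sequences of such events with unique writes; variables have domain $\mathbb{N}_0$ and initial value $0$. Notions (committed, aborted, live, completion, equivalence, real-time order $\prec_H$, sequential history, legality via $\mathit{Seq}(x)$, $\mathrm{vis}(S,T_i)$) as usual. A program $\mathcal{P}$ assigns a subprogram to each process in $\Pi$; $\mathcal{H}(\mathcal{P},\Pi)$ is the set of all histories producible by executions of $\mathcal{P}$ by $\Pi$. An invocation of $\mathit{write}_i(x,v)$ in $H\in\mathcal{H}(\mathcal{P},\Pi)$ is the last write invocation on $x$ by $T_i$ if no $H'\in\mathcal{H}(\mathcal{P},\Pi)$ having $H$ as a prefix contains in $H'|T_i$ a later invocation of $\mathit{write}_i(x,u)$; a last write is a complete execution of such an invocation with response other than $A_i$; $T_i$ is decided on $x$ in $H$ if $H|T_i$ contains a complete write $w_i(x,v)\to ok_i$ that is a last write. $S\Downarrow_C T_j$ denotes $T_j$'s $\mathit{init}_j$ execution and all its operation executions on variables on which $T_j$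 is decided in $H$, followed by $\mathit{tryC}_j\to C_j$. For sequential $S$ equivalent to a completion of $H$, a last-use view of $T_i$ is a subhistory $V$ of $S$ that, for each $T_j$: contains $S|T_j$ if $j=i$ or ($T_j$ committed in $S$ and $T_j\prec_S T_i$); if $T_j$ is not committed in $S$, is decided on some variable in $H$, $T_j\prec_S T_i$ and not $T_j\prec_H T_i$, contains either $S\Downarrow_C T_j$ or nothing of $T_j$; otherwise contains nothing of $T_j$. $T_i$ is last-use legal in $S$ if some last-use view of $T_i$ is legal. A finite $H$ is final-state last-use opaque iff there is a sequential $S$ equivalent to some completion of $H$ that preserves the real-time order of $H$, in which every committed transaction is legal (i.e. $\mathrm{vis}(S,T_i)$ legal) and every non-committed transaction is last-use legal. $H$ is last-use opaque iff every finite prefix of $H$ is final-state last-use opaque. *)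

theory Defs
  imports Main "HOL-Library.Sublist"
begin

type_synonym tid = nat
type_synonym var = nat
type_synonym val = nat   (* values, domain N_0, initial value 0 *)

text \<open>Invocation and response events. Responses: ok_i, a read value v,
  C_i (commit) and A_i (abort).\<close>
datatype event =
    InvInit tid | InvRead tid var | InvWrite tid var val | InvTryC tid | InvTryA tid
  | RespOk tid | RespVal tid val | RespC tid | RespA tid

fun tid_of :: "event \<Rightarrow> tid" where
  "tid_of (InvInit i) = i" | "tid_of (InvRead i x) = i" | "tid_of (InvWrite i x v) = i"
| "tid_of (InvTryC i) = i" | "tid_of (InvTryA i) = i" | "tid_of (RespOk i) = i"
| "tid_of (RespVal i v) = i" | "tid_of (RespC i) = i" | "tid_of (RespA i) = i"

fun is_inv :: "event \<Rightarrow> bool" where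
  "is_inv (InvInit i) = True" | "is_inv (InvRead i x) = True" | "is_inv (InvWrite i x v) = True"
| "is_inv (InvTryC i) = True" | "is_inv (InvTryA i) = True" | "is_inv _ = False"

fun matches :: "event \<Rightarrow> event \<Rightarrow> bool" where
  "matches (InvInit i) r = (r = RespOk i \<or> r = RespA i)"
| "matches (InvRead i x) r = ((\<exists>v. r = RespVal i v) \<or> r = RespA i)"
| "matches (InvWrite i x v) r = (r = RespOk i \<or> r = RespA i)"
| "matches (InvTryC i) r = (r = RespC i \<or> r = RespA i)"
| "matches (InvTryA i) r = (r = RespA i)"
| "matches _ r = False"

fun is_final_resp :: "event \<Rightarrow> bool" where
  "is_final_resp (RespC i) = True" | "is_final_resp (RespA i) = True" | "is_final_resp _ = False"

definition proj :: "event list \<Rightarrow> tid \<Rightarrow> event list" where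
  "proj H i = filter (\<lambda>e. tid_of e = i) H"

fun wf_ops :: "event list \<Rightarrow> bool" where
  "wf_ops [] = True"
| "wf_ops [e] = (is_inv e \<and> (\<forall>j. e \<noteq> InvInit j))"
| "wf_ops (e # r # rest) = (is_inv e \<and> (\<forall>j. e \<noteq> InvInit j) \<and> matches e r
      \<and> (is_final_resp r \<longrightarrow> rest = []) \<and> wf_ops rest)"

fun wf_txn :: "event list \<Rightarrow> bool" where
  "wf_txn [] = True"
| "wf_txn [e] = (\<exists>j. e = InvInit j)"
| "wf_txn (e # r # rest) = ((\<exists>j. e = InvInit j) \<and> matches e r
      \<and> (is_final_resp r \<longrightarrow> rest = []) \<and> wf_ops rest)"

definition unique_writes :: "event list \<Rightarrow> bool" where
  "unique_writes H = (\<forall>a b i j x v. a < b \<and> b < length H \<and> H ! a = InvWrite i x v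
       \<longrightarrow> H ! b \<noteq> InvWrite j x v)"

definition wf_history :: "event list \<Rightarrow> bool" where
  "wf_history H = ((\<forall>i. wf_txn (proj H i)) \<and> unique_writes H)"

definition committed :: "event list \<Rightarrow> tid \<Rightarrow> bool" where
  "committed H i = (RespC i \<in> set H)"

definition aborted :: "event list \<Rightarrow> tid \<Rightarrow> bool" where
  "aborted H i = (RespA i \<in> set H)"

definition live :: "event list \<Rightarrow> tid \<Rightarrow> bool" where
  "live H i = (proj H i \<noteq> [] \<and> \<not> committed H i \<and> \<not> aborted H i)"

definition completion :: "event list \<Rightarrow> event list \<Rightarrow> bool" where
  "completion H H' = (\<exists>E. H' = H @ E \<and> (\<forall>i.
      if \<not> live H i then proj E i = []
      else if last (proj H i) = InvTryC i then (proj E i = [RespC i] \<or> proj E i = [RespA i])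
      else if is_inv (last (proj H i)) then proj E i = [RespA i]
      else proj E i = [InvTryA i, RespA i]))"

definition equivalent :: "event list \<Rightarrow> event list \<Rightarrow> bool" where
  "equivalent S H = (\<forall>i. proj S i = proj H i)"

definition rt :: "event list \<Rightarrow> tid \<Rightarrow> tid \<Rightarrow> bool" where
  "rt H j i = ((committed H j \<or> aborted H j) \<and>
     (\<forall>a b. a < length H \<and> b < length H \<and> tid_of (H ! a) = j \<and> tid_of (H ! b) = i \<longrightarrow> a < b))"

definition preserves_rt :: "event list \<Rightarrow> event list \<Rightarrow> bool" where
  "preserves_rt H S = (\<forall>i j. rt H j i \<longrightarrow> rt S j i)"

definition sequential :: "event list \<Rightarrow> bool" where
  "sequential S = (\<forall>a b c. a < b \<and> b < c \<and> c < length S \<and> tid_of (S ! a) = tid_of (S ! c)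
       \<longrightarrow> tid_of (S ! b) = tid_of (S ! a))"

definition ok_write_at :: "event list \<Rightarrow> var \<Rightarrow> nat \<Rightarrow> bool" where
  "ok_write_at S x m = (Suc m < length S \<and> (\<exists>j w. S ! m = InvWrite j x w \<and> S ! Suc m = RespOk j))"

fun written :: "event \<Rightarrow> val" where
  "written (InvWrite j x w) = w" | "written _ = 0"

definition cur_val :: "event list \<Rightarrow> var \<Rightarrow> nat \<Rightarrow> val" where
  "cur_val S x k = (let ws = filter (ok_write_at S x) [0..<k] in
      if ws = [] then 0 else written (S ! last ws))"

definition legal :: "event list \<Rightarrow> bool" where
  "legal S = (\<forall>k i x v. Suc k < length S \<and> S ! k = InvRead i x \<and> S ! Suc k = RespVal i v
       \<longrightarrow> v = cur_val S x k)"

definition vis :: "event list \<Rightarrow> tid \<Rightarrow> event list" where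
  "vis S i = filter (\<lambda>e. tid_of e = i \<or> (committed S (tid_of e) \<and> rt S (tid_of e) i)) S"

text \<open>HP is the set of (finite) histories producible by executions of a program P by processes Pi.\<close>
definition last_write_inv :: "event list set \<Rightarrow> event list \<Rightarrow> nat \<Rightarrow> bool" where
  "last_write_inv HP H k = (\<exists>i x v. k < length H \<and> H ! k = InvWrite i x v \<and>
      \<not> (\<exists>H' \<in> HP. prefix H H' \<and> (\<exists>m u. k < m \<and> m < length H' \<and> H' ! m = InvWrite i x u)))"

definition decided :: "event list set \<Rightarrow> event list \<Rightarrow> tid \<Rightarrow> var \<Rightarrow> bool" where
  "decided HP H i x = (\<exists>k v m. H ! k = InvWrite i x v \<and> last_write_inv HP H k \<and>
      k < m \<and> m < length H \<and> H ! m = RespOk i \<and> (\<forall>l. k < l \<and> l < m \<longrightarrow> tid_of (H ! l) \<noteq> i))"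

fun keep_ops :: "(var \<Rightarrow> bool) \<Rightarrow> event list \<Rightarrow> event list" where
  "keep_ops P (InvInit j # r # rest) = InvInit j # r # keep_ops P rest"
| "keep_ops P (InvRead j x # r # rest) = (if P x then [InvRead j x, r] else []) @ keep_ops P rest"
| "keep_ops P (InvWrite j x v # r # rest) = (if P x then [InvWrite j x v, r] else []) @ keep_ops P rest"
| "keep_ops P (e # r # rest) = keep_ops P rest"
| "keep_ops P _ = []"

definition downC :: "event list set \<Rightarrow> event list \<Rightarrow> event list \<Rightarrow> tid \<Rightarrow> event list" where
  "downC HP H S j = keep_ops (decided HP H j) (proj S j) @ [InvTryC j, RespC j]"

definition txn_order :: "event list \<Rightarrow> tid list" where
  "txn_order S = remdups (map tid_of S)"

definition lu_view :: "event list set \<Rightarrow> event list \<Rightarrow> event list \<Rightarrow> tid \<Rightarrow> event list \<Rightarrow> bool" where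
  "lu_view HP H S i V = (\<exists>g. V = concat (map g (txn_order S)) \<and>
     (\<forall>j \<in> set (txn_order S).
        if j = i \<or> (committed S j \<and> rt S j i) then g j = proj S j
        else if \<not> committed S j \<and> (\<exists>x. decided HP H j x) \<and> rt S j i \<and> \<not> rt H j i
          then (g j = downC HP H S j \<or> g j = [])
        else g j = []))"

definition lu_legal :: "event list set \<Rightarrow> event list \<Rightarrow> event list \<Rightarrow> tid \<Rightarrow> bool" where
  "lu_legal HP H S i = (\<exists>V. lu_view HP H S i V \<and> legal V)"

definition final_state_lu_opaque :: "event list set \<Rightarrow> event list \<Rightarrow> bool" where
  "final_state_lu_opaque HP H = (\<exists>H' S. completion H H' \<and> sequential S \<and> equivalent S H'
      \<and> preserves_rt H S
      \<and> (\<forall>i. committed S i \<longrightarrow> legal (vis S i))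
      \<and> (\<forall>i \<in> tid_of ` set S. \<not> committed S i \<longrightarrow> lu_legal HP H S i))"

definition lu_opaque :: "event list set \<Rightarrow> event list \<Rightarrow> bool" where
  "lu_opaque HP H = (\<forall>H0. prefix H0 H \<longrightarrow> final_state_lu_opaque HP H0)"

definition lu_opaque_inf :: "event list set \<Rightarrow> (nat \<Rightarrow> event) \<Rightarrow> bool" where
  "lu_opaque_inf HP f = (\<forall>n. final_state_lu_opaque HP (map f [0..<n]))"

end

theory Submission
  imports Defs
begin

text \<open>Last-use opacity of a finite history is final-state last-use opacity of all of its
  prefixes, so it is prefix-closed outright. For limit-closure, every finite prefix of the
  limit history is a prefix of some member of the chain, hence final-state last-use opaque.\<close>

lemma lu_opaque_prefix:
  assumes "lu_opaque HP H" and "prefix H' H"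
  shows "lu_opaque HP H'"
  using assms prefix_order.order_trans unfolding lu_opaque_def by blast

lemma prefix_map_upt_eq:
  assumes "prefix xs (map f [0..<n])"
  shows "xs = map f [0..<length xs]"
proof -
  have "length xs \<le> n"
    using prefix_length_le[OF assms] by simp
  moreover have "xs = take (length xs) (map f [0..<n])"
    using assms by (metis append_eq_conv_conj prefix_def)
  ultimately show ?thesis
    by (simp add: take_map)
qed

lemma lu_opaque_inf_iff:
  "lu_opaque_inf HP f \<longleftrightarrow> (\<forall>n. lu_opaque HP (map f [0..<n]))"
  unfolding lu_opaque_inf_def lu_opaque_def
  by (metis prefix_map_upt_eq prefix_order.order_refl)

lemma map_upt_eq_take:
  assumes "n \<le> length xs" and "\<And>k. k < length xs \<Longrightarrow> f k = xs ! k"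
  shows "map f [0..<n] = take n xs"
  using assms by (intro nth_equalityI) auto

lemma lu_opaque_inf_of_covering:
  assumes opaque: "\<And>h. lu_opaque HP (Hs h)"
    and covers: "\<And>n. \<exists>h. n \<le> length (Hs h)"
    and agrees: "\<And>h n. n < length (Hs h) \<Longrightarrow> f n = Hs h ! n"
  shows "lu_opaque_inf HP f"
  unfolding lu_opaque_inf_iff
proof
  fix n
  obtain h where "n \<le> length (Hs h)"
    using covers by blast
  then have "map f [0..<n] = take n (Hs h)"
    using agrees by (rule map_upt_eq_take)
  then show "lu_opaque HP (map f [0..<n])"
    using lu_opaque_prefix[OF opaque take_is_prefix] by simp
qed

theorem mainTheorem5:
  fixes HP :: "event list set"
  assumes "\<forall>H \<in> HP. wf_history H"
  shows "(\<forall>H \<in> HP. lu_opaque HP H \<longrightarrow> (\<forall>H'. prefix H' H \<longrightarrow> lu_opaque HP H'))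
    \<and> (\<forall>f :: nat \<Rightarrow> event. (\<forall>n. map f [0..<n] \<in> HP) \<longrightarrow> lu_opaque_inf HP f
          \<longrightarrow> (\<forall>n. lu_opaque HP (map f [0..<n])))
    \<and> (\<forall>(Hs :: nat \<Rightarrow> event list) (f :: nat \<Rightarrow> event).
          (\<forall>h. Hs h \<in> HP \<and> lu_opaque HP (Hs h) \<and> prefix (Hs h) (Hs (Suc h)))
          \<and> (\<forall>n. \<exists>h. n < length (Hs h))
          \<and> (\<forall>h n. n < length (Hs h) \<longrightarrow> f n = Hs h ! n)
          \<longrightarrow> lu_opaque_inf HP f)"
proof (intro conjI allI impI ballI)
  fix H H' assume "lu_opaque HP H" "prefix H' H"
  then show "lu_opaque HP H'" by (rule lu_opaque_prefix)
next
  fix f n assume "lu_opaque_inf HP f"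
  then show "lu_opaque HP (map f [0..<n])" by (simp add: lu_opaque_inf_iff)
next
  fix Hs f
  assume chain: "(\<forall>h. Hs h \<in> HP \<and> lu_opaque HP (Hs h) \<and> prefix (Hs h) (Hs (Suc h)))
          \<and> (\<forall>n. \<exists>h. n < length (Hs h))
          \<and> (\<forall>h n. n < length (Hs h) \<longrightarrow> f n = Hs h ! n)"
  show "lu_opaque_inf HP f"
  proof (rule lu_opaque_inf_of_covering)
    show "\<exists>h. n \<le> length (Hs h)" for n
      using chain less_imp_le by blast
  qed (use chain in auto)
qed

end
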